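(* (1) Any two distinct Bernoulli measures on $\Sigma^\mathbb{Z}$ induce distinct topologies on $\mathtt{CA}$ via the pseudometrics $\delta^\mu$. (2) If $\mu_p$ is a Bernoulli measure and $\nu\ne\mu_p$ is a shift-invariant Borel probability measure on $\Sigma^\mathbb{Z}$, then the topology induced by $\delta^\nu$ on $\mathtt{CA}$ differs from that induced by $\delta^{\mu_p}$.
   Context: $\Sigma$ is a finite alphabet with $|\Sigma|\ge2$. A cellular automaton (CA) is a continuous map $c:\Sigma^\mathbb{Z}\to\Sigma^\mathbb{Z}$ commuting with the shift; $\mathtt{CA}$ is the set of all CA. For $p:\Sigma\to[0,1]$ with $\sum_a p(a)=1$, the Bernoulli measure $\mu_p$ is the Borel probability measure with $\mu_p(\{x\mid x_{[n,n+|w|-1]}=w\})=\prod_{i=0}^{|w|-1}p(w_i)$ for all words $w$ and $n\in\mathbb{Z}$. For a Borel probability measure $\mu$, $\delta^\mu(c,d)=\mu(\{x\mid c(x)_0\ne d(x)_0\})$. *)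

theory Defs
  imports "HOL-Probability.Probability"
begin

definition cfg_top :: "(int \<Rightarrow> 'a) topology" where
  "cfg_top = product_topology (\<lambda>_. discrete_topology UNIV) UNIV"

definition shift :: "(int \<Rightarrow> 'a) \<Rightarrow> (int \<Rightarrow> 'a)" where
  "shift x = (\<lambda>i. x (i + 1))"

definition CA :: "((int \<Rightarrow> 'a) \<Rightarrow> (int \<Rightarrow> 'a)) set" where
  "CA = {c. continuous_map cfg_top cfg_top c \<and> (\<forall>x. c (shift x) = shift (c x))}"

definition borel_prob :: "(int \<Rightarrow> 'a) measure \<Rightarrow> bool" where
  "borel_prob M \<longleftrightarrow> prob_space M \<and> space M = UNIV \<and>
     sets M = sigma_sets UNIV {U. openin cfg_top U}"

definition shift_invariant :: "(int \<Rightarrow> 'a) measure \<Rightarrow> bool" where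
  "shift_invariant M \<longleftrightarrow> (\<forall>A\<in>sets M. measure M (shift -` A) = measure M A)"

definition prob_vector :: "('a::finite \<Rightarrow> real) \<Rightarrow> bool" where
  "prob_vector p \<longleftrightarrow> (\<forall>a. 0 \<le> p a) \<and> (\<Sum>a\<in>UNIV. p a) = 1"

definition bernoulli_measure :: "('a::finite \<Rightarrow> real) \<Rightarrow> (int \<Rightarrow> 'a) measure \<Rightarrow> bool" where
  "bernoulli_measure p M \<longleftrightarrow> prob_vector p \<and> borel_prob M \<and>
     (\<forall>(w::'a list) (n::int).
        measure M {x. \<forall>i<length w. x (n + int i) = w ! i} = (\<Prod>i<length w. p (w ! i)))"

definition delta :: "(int \<Rightarrow> 'a) measure \<Rightarrow> ((int \<Rightarrow> 'a) \<Rightarrow> (int \<Rightarrow> 'a)) \<Rightarrow>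
    ((int \<Rightarrow> 'a) \<Rightarrow> (int \<Rightarrow> 'a)) \<Rightarrow> real" where
  "delta M c d = measure M {x. c x 0 \<noteq> d x 0}"

definition delta_open_sets :: "(int \<Rightarrow> 'a) measure \<Rightarrow> ((int \<Rightarrow> 'a) \<Rightarrow> (int \<Rightarrow> 'a)) set set" where
  "delta_open_sets M = {U. U \<subseteq> CA \<and>
     (\<forall>c\<in>U. \<exists>e>0. \<forall>d\<in>CA. delta M c d < e \<longrightarrow> d \<in> U)}"

end

theory Submission
  imports Defs
begin

text \<open>
  Let \<open>\<mu>\<^sub>p\<close> be a Bernoulli measure and \<open>\<nu> \<noteq> \<mu>\<^sub>p\<close> a Borel
  probability measure whose cylinder probabilities do not depend on the position of the
  cylinder (every shift-invariant measure and every Bernoulli measure has this property).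
  Since a Borel probability measure is determined by its values on cylinders, some word
  \<open>w\<close> has \<open>\<nu>([w]\<^sub>i) = r \<noteq> P = \<mu>\<^sub>p([w])\<close> for all positions \<open>i\<close>.  Let \<open>G\<^sub>n\<close> be the set of
  configurations in which the number of occurrences of \<open>w\<close> among the first \<open>n\<close> aligned
  blocks of length \<open>|w|\<close> deviates from \<open>nP\<close> by more than \<open>n\<epsilon>\<close>, with \<open>\<epsilon> = |r - P|/2\<close>.
  By Chebyshev's inequality \<open>\<mu>\<^sub>p(G\<^sub>n) \<le> 1/(n\<epsilon>\<^sup>2)\<close>, whereas an averaging argument gives
  \<open>\<nu>(G\<^sub>n) \<ge> \<epsilon>\<close>.  The cellular automaton that changes the symbol at cell \<open>i\<close> exactly when the
  configuration seen from \<open>i\<close> lies in \<open>G\<^sub>n\<close> is therefore \<open>\<delta>\<^sup>\<mu>\<close>-close to the identity but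
  \<open>\<delta>\<^sup>\<nu>\<close>-far from it, so the \<open>\<delta>\<^sup>\<nu>\<close>-ball of radius \<open>\<epsilon>\<close> around the identity is not \<open>\<delta>\<^sup>\<mu>\<close>-open.
\<close>

subsection \<open>The configuration space\<close>

lemma topspace_cfg_top [simp]: "topspace cfg_top = UNIV"
  by (simp add: cfg_top_def)

lemma openin_cfg_top_fixed_coords:
  assumes "finite J"
  shows "openin cfg_top {y. \<forall>j\<in>J. y j = x j}"
proof -
  have eq: "{y. \<forall>j\<in>J. y j = x j} = Pi\<^sub>E UNIV (\<lambda>j. if j \<in> J then {x j} else UNIV)"
    by (auto simp: PiE_iff split: if_splits)
  have "finite {i. (if i \<in> J then {x i} else UNIV) \<noteq> (UNIV::'a set)}"
    by (rule finite_subset[OF _ assms]) auto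
  then show ?thesis
    unfolding eq cfg_top_def by (subst openin_PiE_gen) auto
qed

lemma openin_cfg_top_finite_dependence:
  assumes "finite J" and "\<And>x y. (\<forall>j\<in>J. x j = y j) \<Longrightarrow> x \<in> S \<Longrightarrow> y \<in> S"
  shows "openin cfg_top S"
proof (subst openin_subopen, intro ballI)
  fix x assume "x \<in> S"
  then have "{y. \<forall>j\<in>J. y j = x j} \<subseteq> S" using assms(2)[of x] by auto
  then show "\<exists>T. openin cfg_top T \<and> x \<in> T \<and> T \<subseteq> S"
    using openin_cfg_top_fixed_coords[OF assms(1), of x] by blast
qed

lemma continuous_map_cfg_top_finite_dependence:
  fixes c :: "(int \<Rightarrow> 'a) \<Rightarrow> int \<Rightarrow> 'a"
  assumes "\<And>i. finite (J i)" and "\<And>i x y. (\<forall>j\<in>J i. x j = y j) \<Longrightarrow> c x i = c y i"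
  shows "continuous_map cfg_top cfg_top c"
proof -
  have "continuous_map cfg_top (discrete_topology UNIV) (\<lambda>x. c x i)" for i
    unfolding continuous_map_openin_preimage_eq
  proof (intro conjI allI impI)
    fix U :: "'a set"
    show "openin cfg_top (topspace cfg_top \<inter> (\<lambda>x. c x i) -` U)"
      by (rule openin_cfg_top_finite_dependence[OF assms(1)[of i]]) (use assms(2)[of i] in force)
  qed auto
  then show ?thesis
    by (subst (2) cfg_top_def) (simp add: continuous_map_componentwise_UNIV)
qed

lemma CA_disagreement_openin:
  assumes "c \<in> CA" "d \<in> CA"
  shows "openin cfg_top {x. c x 0 \<noteq> d x 0}"
proof -
  have "continuous_map cfg_top (discrete_topology UNIV) (\<lambda>x. x 0)"
    unfolding cfg_top_def by (rule continuous_map_product_projection) auto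
  then have origin_cont: "continuous_map cfg_top (discrete_topology UNIV) (\<lambda>x. e x 0)"
    if "e \<in> CA" for e
    using that continuous_map_compose[of cfg_top cfg_top e] by (auto simp: CA_def o_def)
  have preimage_open: "openin cfg_top {x. e x 0 \<in> U}" if "e \<in> CA" for e U
    using openin_continuous_map_preimage[OF origin_cont[OF that], of U] by simp
  have "{x. c x 0 \<noteq> d x 0} = (\<Union>a. {x. c x 0 \<in> {a}} \<inter> {x. d x 0 \<in> - {a}})" by auto
  also have "openin cfg_top \<dots>"
    using preimage_open[OF assms(1), of "{_}"] preimage_open[OF assms(2), of "- {_}"]
    by (intro openin_Union) (auto intro!: openin_Int)
  finally show ?thesis .
qed

lemma borel_prob_openin_sets: "borel_prob M \<Longrightarrow> openin cfg_top S \<Longrightarrow> S \<in> sets M"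
  by (auto simp: borel_prob_def)

lemma borel_prob_prob_space: "borel_prob M \<Longrightarrow> prob_space M"
  by (simp add: borel_prob_def)


subsection \<open>Cylinders and their Bernoulli measures\<close>

definition cyl :: "'a list \<Rightarrow> int \<Rightarrow> (int \<Rightarrow> 'a) set" where
  "cyl w n = {x. \<forall>i<length w. x (n + int i) = w ! i}"

lemma cyl_openin: "openin cfg_top (cyl w n)"
  by (rule openin_cfg_top_finite_dependence[of "(\<lambda>i. n + int i) ` {..<length w}"])
     (auto simp: cyl_def)

lemma bernoulli_measure_borel_prob: "bernoulli_measure p M \<Longrightarrow> borel_prob M"
  by (simp add: bernoulli_measure_def)

lemma bernoulli_measure_cyl:
  assumes "bernoulli_measure p M"
  shows "measure M (cyl w n) = prod_list (map p w)"
  using assms unfolding bernoulli_measure_def cyl_def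
  by (simp add: prod.list_conv_set_nth atLeast0LessThan)

lemma sum_prod_list_words:
  fixes p :: "'a::finite \<Rightarrow> real"
  shows "(\<Sum>z\<in>{z. length z = g}. prod_list (map p z)) = (sum p UNIV) ^ g"
proof (induction g)
  case 0
  then show ?case by simp
next
  case (Suc g)
  have eq: "{z. length z = Suc g} = (\<lambda>(a, z). a # z) ` (UNIV \<times> {z. length z = g})"
    by (auto simp: image_iff length_Suc_conv)
  have inj: "inj_on (\<lambda>(a, z). a # z) (UNIV \<times> {z::'a list. length z = g})"
    by (auto simp: inj_on_def)
  have "(\<Sum>z\<in>{z. length z = Suc g}. prod_list (map p z))
      = (\<Sum>(a, z)\<in>UNIV \<times> {z. length z = g}. p a * prod_list (map p z))"
    unfolding eq by (subst sum.reindex[OF inj]) (simp add: case_prod_beta)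
  also have "\<dots> = (\<Sum>a\<in>UNIV. \<Sum>z\<in>{z. length z = g}. p a * prod_list (map p z))"
    by (subst sum.cartesian_product) simp
  also have "\<dots> = (\<Sum>a\<in>UNIV. p a) * (sum p UNIV) ^ g"
    by (simp add: sum_distrib_left[symmetric] Suc sum_distrib_right)
  finally show ?case by simp
qed

lemma cyl_gap_decomposition:
  "cyl u n \<inter> cyl v (n + int (length u) + int g) = (\<Union>z\<in>{z. length z = g}. cyl (u @ z @ v) n)"
proof (intro equalityI subsetI)
  fix x assume x: "x \<in> cyl u n \<inter> cyl v (n + int (length u) + int g)"
  define z where "z = map (\<lambda>i. x (n + int (length u) + int i)) [0..<g]"
  have "x \<in> cyl (u @ z @ v) n"
    unfolding cyl_def
  proof (intro CollectI allI impI)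
    fix i assume i: "i < length (u @ z @ v)"
    consider "i < length u" | "length u \<le> i" "i < length u + g" | "length u + g \<le> i"
      by linarith
    then show "x (n + int i) = (u @ z @ v) ! i"
    proof cases
      case 1
      then show ?thesis using x by (auto simp: cyl_def nth_append)
    next
      case 2
      then show ?thesis by (auto simp: z_def nth_append)
    next
      case 3
      then have "i - length u - g < length v" using i by (simp add: z_def)
      with x have "x (n + int (length u) + int g + int (i - length u - g)) = v ! (i - length u - g)"
        by (auto simp: cyl_def)
      moreover have "n + int (length u) + int g + int (i - length u - g) = n + int i"
        using 3 by simp
      ultimately show ?thesis using 3 by (auto simp: z_def nth_append)
    qed
  qed
  moreover have "length z = g" by (simp add: z_def)
  ultimately show "x \<in> (\<Union>z\<in>{z. length z = g}. cyl (u @ z @ v) n)" by blast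
next
  fix x assume "x \<in> (\<Union>z\<in>{z. length z = g}. cyl (u @ z @ v) n)"
  then obtain z where z: "length z = g" "x \<in> cyl (u @ z @ v) n" by auto
  have "x (n + int (length u + g + i)) = v ! i" if "i < length v" for i
    using z that unfolding cyl_def by (auto simp: nth_append dest!: spec[of _ "length u + g + i"])
  moreover have "x (n + int i) = u ! i" if "i < length u" for i
    using z that unfolding cyl_def by (auto simp: nth_append dest!: spec[of _ i])
  ultimately show "x \<in> cyl u n \<inter> cyl v (n + int (length u) + int g)"
    by (simp add: cyl_def add.assoc)
qed

lemma cyl_fillings_disjoint:
  assumes "length z = length z'" "z \<noteq> z'"
  shows "cyl (u @ z @ v) n \<inter> cyl (u @ z' @ v) n = {}"
proof -
  obtain i where i: "i < length z" "z ! i \<noteq> z' ! i"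
    using assms list_eq_iff_nth_eq by blast
  have "(u @ z @ v) ! (length u + i) \<noteq> (u @ z' @ v) ! (length u + i)"
    using i assms(1) by (simp add: nth_append)
  then show ?thesis
    using i assms(1) unfolding cyl_def by (auto dest!: spec[of _ "length u + i"])
qed

lemma bernoulli_measure_separated_cyls:
  assumes B: "bernoulli_measure p M"
  shows "measure M (cyl u n \<inter> cyl v (n + int (length u) + int g))
       = prod_list (map p u) * prod_list (map p v)"
proof -
  have bp: "borel_prob M" using B by (rule bernoulli_measure_borel_prob)
  interpret prob_space M using bp by (rule borel_prob_prob_space)
  have fin: "finite {z::'a list. length z = g}"
    using finite_lists_length_eq[of "UNIV::'a set" g] by simp
  have "measure M (\<Union>z\<in>{z. length z = g}. cyl (u @ z @ v) n)
      = (\<Sum>z\<in>{z. length z = g}. measure M (cyl (u @ z @ v) n))"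
    by (rule finite_measure_finite_Union[OF fin])
       (auto simp: disjoint_family_on_def
             intro!: cyl_fillings_disjoint borel_prob_openin_sets[OF bp] cyl_openin)
  also have "\<dots> = (\<Sum>z\<in>{z. length z = g}.
                    prod_list (map p u) * prod_list (map p v) * prod_list (map p z))"
    by (simp add: bernoulli_measure_cyl[OF B] mult_ac)
  also have "\<dots> = prod_list (map p u) * prod_list (map p v) * (sum p UNIV) ^ g"
    by (simp add: sum_distrib_left[symmetric] sum_prod_list_words)
  also have "sum p UNIV = 1"
    using B by (simp add: bernoulli_measure_def prob_vector_def)
  finally show ?thesis by (simp add: cyl_gap_decomposition)
qed


subsection \<open>A Borel probability measure is determined by its values on cylinders\<close>

text \<open>Together with \<open>{}\<close> these sets form a
  countable, intersection-stable generator of the Borel \<open>\<sigma>\<close>-algebra.\<close>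

definition centred_cyl :: "nat \<Rightarrow> (int \<Rightarrow> 'a) \<Rightarrow> (int \<Rightarrow> 'a) set" where
  "centred_cyl k f = {x. \<forall>i. \<bar>i\<bar> \<le> int k \<longrightarrow> x i = f i}"

definition centred_cyls :: "(int \<Rightarrow> 'a) set set" where
  "centred_cyls = {centred_cyl k f | k f. True} \<union> {{}}"

lemma centred_cyl_eq_cyl:
  "centred_cyl k f = cyl (map (\<lambda>j. f (int j - int k)) [0..<2 * k + 1]) (- int k)"
proof (intro equalityI subsetI)
  fix x assume "x \<in> centred_cyl k f"
  then show "x \<in> cyl (map (\<lambda>j. f (int j - int k)) [0..<2 * k + 1]) (- int k)"
    by (auto simp: centred_cyl_def cyl_def simp del: upt_Suc)
next
  fix x assume x: "x \<in> cyl (map (\<lambda>j. f (int j - int k)) [0..<2 * k + 1]) (- int k)"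
  show "x \<in> centred_cyl k f"
    unfolding centred_cyl_def
  proof (intro CollectI allI impI)
    fix i assume "\<bar>i\<bar> \<le> int k"
    then have "nat (i + int k) < 2 * k + 1" "- int k + int (nat (i + int k)) = i" by auto
    then show "x i = f i"
      using x unfolding cyl_def by (auto simp del: upt_Suc dest!: spec[of _ "nat (i + int k)"])
  qed
qed

lemma centred_cyl_Int:
  assumes "k \<le> k'"
  shows "centred_cyl k f \<inter> centred_cyl k' g
       = (if \<forall>i. \<bar>i\<bar> \<le> int k \<longrightarrow> f i = g i then centred_cyl k' g else {})"
  using assms by (auto simp: centred_cyl_def)

lemma centred_cyls_Int_stable: "Int_stable centred_cyls"
proof (rule Int_stableI)
  have Int_mem: "centred_cyl k f \<inter> centred_cyl k' g \<in> centred_cyls" if "k \<le> k'" for k k' f g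
    unfolding centred_cyl_Int[OF that] by (auto simp: centred_cyls_def)
  fix a b :: "(int \<Rightarrow> 'a) set" assume "a \<in> centred_cyls" "b \<in> centred_cyls"
  then consider "a = {} \<or> b = {}"
    | k f k' g where "a = centred_cyl k f" "b = centred_cyl k' g"
    unfolding centred_cyls_def by blast
  then show "a \<inter> b \<in> centred_cyls"
  proof cases
    case 1
    then show ?thesis by (auto simp: centred_cyls_def)
  next
    case 2
    then show ?thesis using Int_mem[of k k'] Int_mem[of k' k] by (metis Int_commute nle_le)
  qed
qed

lemma countable_centred_cyls: "countable (centred_cyls :: (int \<Rightarrow> 'a::finite) set set)"
proof -
  have "centred_cyls \<subseteq> (\<lambda>(k::nat, w::'a list). cyl w (- int k)) ` UNIV \<union> {{}}"
    by (auto simp: centred_cyls_def centred_cyl_eq_cyl)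
  then show ?thesis by (rule countable_subset) simp
qed

lemma openin_cfg_top_contains_centred_cyl:
  assumes "openin cfg_top U" "x \<in> U"
  shows "\<exists>k. centred_cyl k x \<subseteq> U"
proof -
  from assms obtain V where V: "finite {i. V i \<noteq> (UNIV::'a set)}"
      "x \<in> Pi\<^sub>E UNIV V" "Pi\<^sub>E UNIV V \<subseteq> U"
    unfolding cfg_top_def openin_product_topology_alt by auto
  define F where "F = {i. V i \<noteq> (UNIV::'a set)}"
  define k where "k = (\<Sum>i\<in>F. nat \<bar>i\<bar>)"
  have "nat \<bar>i\<bar> \<le> k" if "i \<in> F" for i
    unfolding k_def using V(1) that F_def by (intro member_le_sum) auto
  then have "centred_cyl k x \<subseteq> Pi\<^sub>E UNIV V"
    using V(2) by (fastforce simp: centred_cyl_def PiE_iff F_def)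
  then show ?thesis using V(3) by blast
qed

lemma sigma_sets_open_eq_centred_cyls:
  "sigma_sets UNIV {U. openin cfg_top U} = sigma_sets UNIV (centred_cyls :: (int \<Rightarrow> 'a::finite) set set)"
proof (rule equalityI)
  have "{U. openin cfg_top U} \<subseteq> sigma_sets UNIV (centred_cyls :: (int \<Rightarrow> 'a) set set)"
  proof
    fix U :: "(int \<Rightarrow> 'a) set" assume "U \<in> {U. openin cfg_top U}"
    then have U: "openin cfg_top U" by simp
    have "U = \<Union>{X\<in>centred_cyls. X \<subseteq> U}"
    proof (intro equalityI subsetI)
      fix x assume "x \<in> U"
      then obtain k where "centred_cyl k x \<subseteq> U"
        using openin_cfg_top_contains_centred_cyl[OF U] by blast
      moreover have "x \<in> centred_cyl k x" by (simp add: centred_cyl_def)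
      ultimately show "x \<in> \<Union>{X\<in>centred_cyls. X \<subseteq> U}" by (auto simp: centred_cyls_def)
    qed auto
    also have "\<dots> \<in> sigma_sets UNIV centred_cyls"
      by (rule sigma_sets_UNION) (auto intro: countable_subset[OF _ countable_centred_cyls])
    finally show "U \<in> sigma_sets UNIV centred_cyls" .
  qed
  then show "sigma_sets UNIV {U. openin cfg_top U} \<subseteq> sigma_sets UNIV (centred_cyls :: (int \<Rightarrow> 'a) set set)"
    by (rule sigma_sets_mono)
  show "sigma_sets UNIV centred_cyls \<subseteq> sigma_sets UNIV {U. openin cfg_top U}"
    by (rule sigma_sets_mono')
       (auto simp: centred_cyls_def centred_cyl_eq_cyl intro: cyl_openin)
qed

lemma borel_prob_eqI_cyl:
  fixes M N :: "(int \<Rightarrow> 'a::finite) measure"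
  assumes M: "borel_prob M" and N: "borel_prob N"
    and eq: "\<And>w n. measure M (cyl w n) = measure N (cyl w n)"
  shows "M = N"
proof (rule measure_eqI_generator_eq_countable[OF centred_cyls_Int_stable,
         where \<Omega>=UNIV and A="range (\<lambda>a. centred_cyl 0 (\<lambda>_. a))"])
  interpret M: prob_space M using M by (rule borel_prob_prob_space)
  interpret N: prob_space N using N by (rule borel_prob_prob_space)
  show "emeasure M X = emeasure N X" if "X \<in> centred_cyls" for X
    using that eq
    by (auto simp: centred_cyls_def centred_cyl_eq_cyl M.emeasure_eq_measure N.emeasure_eq_measure)
  show "sets M = sigma_sets UNIV centred_cyls" "sets N = sigma_sets UNIV centred_cyls"
    using M N sigma_sets_open_eq_centred_cyls by (auto simp: borel_prob_def)
  show "emeasure M a \<noteq> \<infinity>" for a by simp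
  show "range (\<lambda>a. centred_cyl 0 (\<lambda>_. a)) \<subseteq> centred_cyls"
    by (auto simp: centred_cyls_def)
qed (auto simp: centred_cyl_def)


subsection \<open>Stationary cylinder probabilities\<close>

text \<open>The property of \<open>\<nu>\<close> used in the main argument: the probability of a cylinder does
  not depend on where it is placed.  Bernoulli and shift-invariant measures have it.\<close>

definition cyl_stationary :: "(int \<Rightarrow> 'a) measure \<Rightarrow> bool" where
  "cyl_stationary \<nu> \<longleftrightarrow> (\<forall>w n. measure \<nu> (cyl w n) = measure \<nu> (cyl w 0))"

lemma bernoulli_measure_cyl_stationary: "bernoulli_measure p M \<Longrightarrow> cyl_stationary M"
  by (simp add: cyl_stationary_def bernoulli_measure_cyl)

text \<open>Shift invariance moves cylinders by one cell, hence by any number of cells.\<close>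

lemma shift_preimage_cyl: "shift -` cyl w n = cyl w (n + 1)"
  by (auto simp: shift_def cyl_def add_ac)

lemma shift_invariant_cyl_stationary:
  assumes "borel_prob \<nu>" "shift_invariant \<nu>"
  shows "cyl_stationary \<nu>"
  unfolding cyl_stationary_def
proof (intro allI)
  fix w :: "'a list" and n :: int
  have step: "measure \<nu> (cyl w (i + 1)) = measure \<nu> (cyl w i)" for i
    using assms borel_prob_openin_sets[OF assms(1) cyl_openin, of w i]
    unfolding shift_invariant_def by (metis shift_preimage_cyl)
  show "measure \<nu> (cyl w n) = measure \<nu> (cyl w 0)"
  proof (induction n rule: int_induct[where k=0])
    case base
    then show ?case by simp
  next
    case (step1 i)
    then show ?case using step[of i] by simp
  next
    case (step2 i)
    then show ?case using step[of "i - 1"] by simp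
  qed
qed

subsection \<open>A law of large numbers for block counts\<close>

definition block_count :: "'a list \<Rightarrow> nat \<Rightarrow> (int \<Rightarrow> 'a) \<Rightarrow> real" where
  "block_count w n x = (\<Sum>j<n. indicator (cyl w (int (j * length w))) x)"

lemma block_count_bounds: "0 \<le> block_count w n x" "block_count w n x \<le> real n"
proof -
  show "0 \<le> block_count w n x"
    unfolding block_count_def by (intro sum_nonneg) simp
  have "block_count w n x \<le> (\<Sum>j<n. 1)"
    unfolding block_count_def by (intro sum_mono) (simp add: indicator_def)
  then show "block_count w n x \<le> real n" by simp
qed

lemma block_count_local:
  assumes "\<forall>j\<in>int ` {..<n * length w}. x j = y j"
  shows "block_count w n x = block_count w n y"
proof -
  have "x (int (j * length w) + int i) = y (int (j * length w) + int i)"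
    if "j < n" "i < length w" for i j
  proof -
    have "j * length w + i < Suc j * length w" using that by simp
    also have "\<dots> \<le> n * length w" using that by (intro mult_le_mono1) simp
    finally show ?thesis using assms by (metis image_eqI lessThan_iff of_nat_add)
  qed
  then have "x \<in> cyl w (int (j * length w)) \<longleftrightarrow> y \<in> cyl w (int (j * length w))" if "j < n" for j
    using that by (auto simp: cyl_def)
  then show ?thesis
    unfolding block_count_def by (intro sum.cong refl) (simp add: indicator_def)
qed

lemma block_count_measurable:
  "borel_prob M \<Longrightarrow> block_count w n \<in> borel_measurable M"
  unfolding block_count_def
  by (intro borel_measurable_sum borel_measurable_indicator borel_prob_openin_sets cyl_openin)

lemma block_count_centred_abs_le:
  assumes "0 \<le> P" "P \<le> 1"
  shows "\<bar>block_count w n x - real n * P\<bar> \<le> real n"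
proof -
  have "0 \<le> real n * P" "real n * P \<le> real n"
    using assms mult_left_le[of P "real n"] by auto
  then show ?thesis using block_count_bounds[of w n x] by (simp add: abs_le_iff)
qed

lemma (in prob_space) centred_indicators_product:
  assumes "A \<in> events" "B \<in> events"
  shows "integrable M (\<lambda>x. (indicator A x - a) * (indicator B x - b))"
    and "(\<integral>x. (indicator A x - a) * (indicator B x - b) \<partial>M)
       = prob (A \<inter> B) - b * prob A - a * prob B + a * b"
proof -
  have expand: "(\<lambda>x. (indicator A x - a) * (indicator B x - b))
      = (\<lambda>x. indicator (A \<inter> B) x - b * indicator A x - a * indicator B x + a * b :: real)"
    by (auto simp: indicator_def fun_eq_iff algebra_simps)
  have ind: "integrable M (indicator S :: _ \<Rightarrow> real)" if "S \<in> events" for S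
    using that by (intro integrable_real_indicator) (auto simp: less_top[symmetric])
  have AB: "A \<inter> B \<in> events" using assms by blast
  show "integrable M (\<lambda>x. (indicator A x - a) * (indicator B x - b))"
    unfolding expand using ind[OF AB] ind[OF assms(1)] ind[OF assms(2)] by simp
  show "(\<integral>x. (indicator A x - a) * (indicator B x - b) \<partial>M)
       = prob (A \<inter> B) - b * prob A - a * prob B + a * b"
    unfolding expand using ind[OF AB] ind[OF assms(1)] ind[OF assms(2)]
    by (simp add: prob_space sets.Int_space_eq2 assms AB)
qed

text \<open>Under a Bernoulli measure the aligned blocks are independent, so the block count is
  binomially distributed; we only need its variance \<open>n(P - P\<^sup>2)\<close>.\<close>

lemma bernoulli_aligned_blocks:
  fixes w :: "'a::finite list"
  assumes B: "bernoulli_measure p M"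
  defines "P \<equiv> prod_list (map p w)"
  shows "measure M (cyl w (int (j * length w)) \<inter> cyl w (int (k * length w)))
       = (if j = k then P else P * P)"
proof -
  have separated: "measure M (cyl w (int (j * length w)) \<inter> cyl w (int (k * length w))) = P * P"
    if jk: "j < k" for j k
  proof -
    obtain d where d: "k = j + 1 + d" using less_imp_Suc_add[OF jk] by auto
    then have "int (k * length w) = int (j * length w) + int (length w) + int (d * length w)"
      by (simp add: algebra_simps)
    moreover have "k - j - 1 = d" using d by simp
    ultimately show ?thesis
      using bernoulli_measure_separated_cyls[OF B, of w "int (j * length w)" w "(k - j - 1) * length w"]
      by (simp add: P_def)
  qed
  show ?thesis
    using separated[of j k] separated[of k j]
    by (cases j k rule: linorder_cases) (auto simp: Int_commute P_def bernoulli_measure_cyl[OF B])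
qed

lemma bernoulli_block_count_variance:
  fixes w :: "'a::finite list"
  assumes B: "bernoulli_measure p M"
  defines "P \<equiv> prod_list (map p w)"
  shows "(\<integral>x. (block_count w n x - real n * P)\<^sup>2 \<partial>M) = real n * (P - P * P)"
proof -
  interpret prob_space M using B by (intro borel_prob_prob_space bernoulli_measure_borel_prob)
  define A where "A j = cyl w (int (j * length w))" for j
  have events: "A j \<in> events" for j
    unfolding A_def by (rule borel_prob_openin_sets[OF bernoulli_measure_borel_prob[OF B] cyl_openin])
  define T where "T j k x = (indicator (A j) x - P) * (indicator (A k) x - P)" for j k x
  have "(block_count w n x - real n * P)\<^sup>2 = (\<Sum>j<n. \<Sum>k<n. T j k x)" for x
  proof -
    have "block_count w n x - real n * P = (\<Sum>j<n. indicator (A j) x - P)"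
      by (simp add: block_count_def A_def sum_subtractf)
    then show ?thesis by (simp add: power2_eq_square sum_product T_def)
  qed
  moreover have "(\<integral>x. T j k x \<partial>M) = (if j = k then P - P * P else 0)" for j k
  proof -
    have "measure M (A j) = P" "measure M (A k) = P"
      by (simp_all add: A_def P_def bernoulli_measure_cyl[OF B])
    moreover have "measure M (A j \<inter> A k) = (if j = k then P else P * P)"
      unfolding A_def P_def by (rule bernoulli_aligned_blocks[OF B])
    ultimately show ?thesis
      unfolding T_def centred_indicators_product(2)[OF events events] by simp
  qed
  moreover have "integrable M (T j k)" for j k
    unfolding T_def by (rule centred_indicators_product(1)[OF events events])
  ultimately have "(\<integral>x. (block_count w n x - real n * P)\<^sup>2 \<partial>M)
      = (\<Sum>j<n. \<Sum>k<n. if j = k then P - P * P else 0)"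
    by (simp add: Bochner_Integration.integral_sum)
  then show ?thesis by simp
qed


definition deviation_set :: "'a list \<Rightarrow> real \<Rightarrow> nat \<Rightarrow> real \<Rightarrow> (int \<Rightarrow> 'a) set" where
  "deviation_set w P n \<epsilon> = {x. real n * \<epsilon> < \<bar>block_count w n x - real n * P\<bar>}"

lemma deviation_set_local:
  assumes "\<forall>j\<in>int ` {..<n * length w}. x j = y j"
  shows "x \<in> deviation_set w P n \<epsilon> \<longleftrightarrow> y \<in> deviation_set w P n \<epsilon>"
  using block_count_local[OF assms] by (simp add: deviation_set_def)

lemma deviation_set_openin: "openin cfg_top (deviation_set w P n \<epsilon>)"
  by (rule openin_cfg_top_finite_dependence[of "int ` {..<n * length w}"])
     (use deviation_set_local in blast)+

lemma bernoulli_cyl_prob_bounds: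
  assumes "bernoulli_measure p M"
  shows "0 \<le> prod_list (map p w)" "prod_list (map p w) \<le> 1"
proof -
  interpret prob_space M using assms by (intro borel_prob_prob_space bernoulli_measure_borel_prob)
  show "0 \<le> prod_list (map p w)" "prod_list (map p w) \<le> 1"
    using bernoulli_measure_cyl[OF assms, of w 0] by (metis measure_nonneg, metis prob_le_1)
qed

text \<open>Chebyshev's inequality: under \<open>\<mu>\<^sub>p\<close> large deviations of the block count are rare.\<close>

lemma bernoulli_deviation_set_small:
  fixes w :: "'a::finite list"
  assumes B: "bernoulli_measure p M" and "n > 0" "\<epsilon> > 0"
  defines "P \<equiv> prod_list (map p w)"
  shows "measure M (deviation_set w P n \<epsilon>) \<le> 1 / (real n * \<epsilon>\<^sup>2)"
proof -
  have bp: "borel_prob M" using B by (rule bernoulli_measure_borel_prob)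
  interpret prob_space M using bp by (rule borel_prob_prob_space)
  have P: "0 \<le> P" "P \<le> 1" unfolding P_def by (rule bernoulli_cyl_prob_bounds[OF B])+
  define f where "f x = block_count w n x - real n * P" for x
  have f_meas [measurable]: "f \<in> borel_measurable M"
    unfolding f_def using block_count_measurable[OF bp] by measurable
  have "integrable M (\<lambda>x. (f x)\<^sup>2)"
  proof (rule integrable_const_bound[where B="(real n)\<^sup>2"])
    show "AE x in M. norm ((f x)\<^sup>2) \<le> (real n)\<^sup>2"
      using block_count_centred_abs_le[OF P, of w n]
      by (intro AE_I2) (simp add: f_def flip: abs_le_square_iff)
  qed measurable
  then have "measure M {x\<in>space M. \<bar>f x\<bar> \<ge> real n * \<epsilon>} \<le> (\<integral>x. (f x)\<^sup>2 \<partial>M) / (real n * \<epsilon>)\<^sup>2"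
    using assms by (intro second_moment_method f_meas) auto
  also have "\<dots> = real n * (P - P * P) / (real n * \<epsilon>)\<^sup>2"
    unfolding f_def P_def by (simp add: bernoulli_block_count_variance[OF B])
  also have "\<dots> \<le> real n / (real n * \<epsilon>)\<^sup>2"
  proof -
    have "P - P * P \<le> 1" using P mult_nonneg_nonneg[of P P] by linarith
    then show ?thesis by (intro divide_right_mono mult_left_le) auto
  qed
  also have "\<dots> = 1 / (real n * \<epsilon>\<^sup>2)"
    using assms by (simp add: power2_eq_square)
  finally have tail: "measure M {x\<in>space M. \<bar>f x\<bar> \<ge> real n * \<epsilon>} \<le> 1 / (real n * \<epsilon>\<^sup>2)" .
  have "deviation_set w P n \<epsilon> \<subseteq> {x\<in>space M. \<bar>f x\<bar> \<ge> real n * \<epsilon>}"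
    using bp by (auto simp: deviation_set_def f_def borel_prob_def)
  then have "measure M (deviation_set w P n \<epsilon>) \<le> measure M {x\<in>space M. \<bar>f x\<bar> \<ge> real n * \<epsilon>}"
    by (intro finite_measure_mono) measurable
  with tail show ?thesis by linarith
qed

text \<open>Averaging: if every cylinder \<open>[w]\<^sub>i\<close> has \<open>\<nu>\<close>-probability \<open>r\<close>, the expected block count
  is \<open>nr\<close>, so the block count must often deviate from \<open>nP\<close> when \<open>r\<close> is far from \<open>P\<close>.\<close>

lemma stationary_deviation_set_large:
  assumes nu: "borel_prob \<nu>" "cyl_stationary \<nu>"
    and P: "0 \<le> P" "P \<le> 1" and "n > 0" "\<epsilon> \<ge> 0"
  shows "\<bar>measure \<nu> (cyl w 0) - P\<bar> \<le> \<epsilon> + measure \<nu> (deviation_set w P n \<epsilon>)"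
proof -
  interpret prob_space \<nu> using nu(1) by (rule borel_prob_prob_space)
  have space: "space \<nu> = UNIV" using nu(1) by (simp add: borel_prob_def)
  define G where "G = deviation_set w P n \<epsilon>"
  define f where "f x = block_count w n x - real n * P" for x
  have cyl_int: "integrable \<nu> (indicator (cyl w i) :: _ \<Rightarrow> real)" for i
    using borel_prob_openin_sets[OF nu(1) cyl_openin]
    by (intro integrable_real_indicator) (auto simp: less_top[symmetric])
  have G_int: "integrable \<nu> (indicator G :: _ \<Rightarrow> real)"
    using borel_prob_openin_sets[OF nu(1) deviation_set_openin] unfolding G_def
    by (intro integrable_real_indicator) (auto simp: less_top[symmetric])
  define r where "r = measure \<nu> (cyl w 0)"
  have stationary: "measure \<nu> (cyl w i) = r" for i
    using nu(2) by (simp add: cyl_stationary_def r_def)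
  have "(\<integral>x. f x \<partial>\<nu>) = (\<Sum>j<n. measure \<nu> (cyl w (int (j * length w)))) - real n * P"
    using cyl_int unfolding f_def block_count_def
    by (simp add: Bochner_Integration.integral_sum prob_space[unfolded space] space)
  also have "\<dots> = real n * (r - P)"
    by (simp add: stationary algebra_simps)
  finally have "(\<integral>x. f x \<partial>\<nu>) = real n * (r - P)" .
  moreover have "\<bar>\<integral>x. f x \<partial>\<nu>\<bar> \<le> (\<integral>x. real n * \<epsilon> + real n * indicator G x \<partial>\<nu>)"
  proof -
    have "0 \<le> real n * \<epsilon>" using \<open>\<epsilon> \<ge> 0\<close> by simp
    then have "\<bar>f x\<bar> \<le> real n * \<epsilon> + real n * indicator G x" for x
    proof (cases "x \<in> G")
      case True
      have "\<bar>f x\<bar> \<le> real n"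
        unfolding f_def by (rule block_count_centred_abs_le[OF P])
      with True \<open>0 \<le> real n * \<epsilon>\<close> show ?thesis by simp
    next
      case False
      then show ?thesis by (simp add: G_def deviation_set_def f_def)
    qed
    moreover have "integrable \<nu> f"
      using cyl_int unfolding f_def block_count_def by simp
    ultimately have "(\<integral>x. \<bar>f x\<bar> \<partial>\<nu>) \<le> (\<integral>x. real n * \<epsilon> + real n * indicator G x \<partial>\<nu>)"
      using G_int by (intro integral_mono) auto
    then show ?thesis
      using integral_abs_bound[of \<nu> f] by linarith
  qed
  moreover have "(\<integral>x. real n * \<epsilon> + real n * indicator G x \<partial>\<nu>) = real n * (\<epsilon> + measure \<nu> G)"
    using G_int by (simp add: prob_space[unfolded space] space algebra_simps)
  ultimately have "real n * \<bar>r - P\<bar> \<le> real n * (\<epsilon> + measure \<nu> G)"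
    by (simp add: abs_mult)
  then show ?thesis using \<open>n > 0\<close> by (simp add: G_def r_def)
qed


subsection \<open>Cellular automata flipping cells on a local pattern\<close>

definition flip_ca :: "('a \<Rightarrow> 'a) \<Rightarrow> (int \<Rightarrow> 'a) set \<Rightarrow> (int \<Rightarrow> 'a) \<Rightarrow> (int \<Rightarrow> 'a)" where
  "flip_ca \<sigma> G x i = (if (\<lambda>k. x (k + i)) \<in> G then \<sigma> (x i) else x i)"

lemma flip_ca_CA:
  assumes "finite J" and local: "\<And>x y. \<forall>j\<in>J. x j = y j \<Longrightarrow> x \<in> G \<longleftrightarrow> y \<in> G"
  shows "flip_ca \<sigma> G \<in> CA"
  unfolding CA_def
proof (intro CollectI conjI allI)
  show "continuous_map cfg_top cfg_top (flip_ca \<sigma> G)"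
  proof (rule continuous_map_cfg_top_finite_dependence[where J="\<lambda>i. insert i ((\<lambda>k. k + i) ` J)"])
    fix i :: int and x y :: "int \<Rightarrow> 'a"
    assume "\<forall>j\<in>insert i ((\<lambda>k. k + i) ` J). x j = y j"
    then have "x i = y i" "(\<lambda>k. x (k + i)) \<in> G \<longleftrightarrow> (\<lambda>k. y (k + i)) \<in> G"
      using local[of "\<lambda>k. x (k + i)" "\<lambda>k. y (k + i)"] by auto
    then show "flip_ca \<sigma> G x i = flip_ca \<sigma> G y i" by (simp add: flip_ca_def)
  qed (use \<open>finite J\<close> in simp)
  show "flip_ca \<sigma> G (shift x) = shift (flip_ca \<sigma> G x)" for x
    by (rule ext) (simp add: flip_ca_def shift_def add_ac)
qed

lemma flip_ca_disagreement:
  assumes "\<And>a. \<sigma> a \<noteq> a"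
  shows "{x. x 0 \<noteq> flip_ca \<sigma> G x 0} = G"
  using assms[THEN not_sym] by (auto simp: flip_ca_def)

lemma fixed_point_free_map_exists:
  assumes "CARD('a::finite) \<ge> 2"
  obtains \<sigma> :: "'a::finite \<Rightarrow> 'a" where "\<And>a. \<sigma> a \<noteq> a"
proof -
  obtain a b :: 'a where "a \<noteq> b"
    using assms card_le_Suc0_iff_eq[of "UNIV::'a set"] by fastforce
  then have "(if y = a then b else a) \<noteq> y" for y by auto
  then show ?thesis by (rule that)
qed

subsection \<open>The topology induced by \<open>\<delta>\<close>\<close>

lemma delta_triangle:
  assumes nu: "borel_prob \<nu>" and "a \<in> CA" "b \<in> CA" "c \<in> CA"
  shows "delta \<nu> a c \<le> delta \<nu> a b + delta \<nu> b c"
proof -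
  interpret prob_space \<nu> using nu by (rule borel_prob_prob_space)
  have ab: "{x. a x 0 \<noteq> b x 0} \<in> sets \<nu>" and bc: "{x. b x 0 \<noteq> c x 0} \<in> sets \<nu>"
    using assms by (auto intro!: borel_prob_openin_sets[OF nu] CA_disagreement_openin)
  have "measure \<nu> {x. a x 0 \<noteq> c x 0} \<le> measure \<nu> ({x. a x 0 \<noteq> b x 0} \<union> {x. b x 0 \<noteq> c x 0})"
    using ab bc by (intro finite_measure_mono) auto
  also have "\<dots> \<le> measure \<nu> {x. a x 0 \<noteq> b x 0} + measure \<nu> {x. b x 0 \<noteq> c x 0}"
    using ab bc by (rule measure_subadditive) simp_all
  finally show ?thesis by (simp add: delta_def)
qed

lemma delta_ball_open:
  assumes nu: "borel_prob \<nu>"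
  shows "{d\<in>CA. delta \<nu> id d < \<epsilon>} \<in> delta_open_sets \<nu>"
  unfolding delta_open_sets_def
proof (intro CollectI conjI ballI)
  fix c assume c: "c \<in> {d\<in>CA. delta \<nu> id d < \<epsilon>}"
  have "delta \<nu> id d < \<epsilon>" if "d \<in> CA" "delta \<nu> c d < \<epsilon> - delta \<nu> id c" for d
    using delta_triangle[OF nu _ _ that(1), of id c] c that(2) by (simp add: CA_def)
  then show "\<exists>e>0. \<forall>d\<in>CA. delta \<nu> c d < e \<longrightarrow> d \<in> {d\<in>CA. delta \<nu> id d < \<epsilon>}"
    using c by (intro exI[of _ "\<epsilon> - delta \<nu> id c"]) auto
qed auto

lemma delta_open_sets_differ:
  assumes nu: "borel_prob \<nu>" and "\<epsilon> > 0"
    and far: "\<And>e. e > 0 \<Longrightarrow> \<exists>c\<in>CA. delta M id c < e \<and> \<epsilon> \<le> delta \<nu> id c"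
  shows "delta_open_sets M \<noteq> delta_open_sets \<nu>"
proof
  assume eq: "delta_open_sets M = delta_open_sets \<nu>"
  define U where "U = {d\<in>CA. delta \<nu> id d < \<epsilon>}"
  have "U \<in> delta_open_sets M" unfolding eq U_def by (rule delta_ball_open[OF nu])
  moreover have "id \<in> U" using \<open>\<epsilon> > 0\<close> by (simp add: U_def delta_def CA_def)
  ultimately obtain e where "e > 0" and ball: "\<And>d. d \<in> CA \<Longrightarrow> delta M id d < e \<Longrightarrow> d \<in> U"
    unfolding delta_open_sets_def by blast
  then obtain c where "c \<in> CA" "delta M id c < e" "\<epsilon> \<le> delta \<nu> id c" using far by blast
  then show False using ball by (force simp: U_def)
qed

lemma delta_topology_separates_from_bernoulli:
  fixes p :: "'a::finite \<Rightarrow> real"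
  assumes card: "CARD('a) \<ge> 2" and B: "bernoulli_measure p M"
    and nu: "borel_prob \<nu>" "cyl_stationary \<nu>" and "\<nu> \<noteq> M"
  shows "delta_open_sets M \<noteq> delta_open_sets \<nu>"
proof -
  have bM: "borel_prob M" using B by (rule bernoulli_measure_borel_prob)
  obtain w where w: "measure \<nu> (cyl w 0) \<noteq> prod_list (map p w)"
    using borel_prob_eqI_cyl[OF nu(1) bM] \<open>\<nu> \<noteq> M\<close> nu(2)
    by (metis bernoulli_measure_cyl[OF B] cyl_stationary_def)
  define P where "P = prod_list (map p w)"
  define \<epsilon> where "\<epsilon> = \<bar>measure \<nu> (cyl w 0) - P\<bar> / 2"
  have "\<epsilon> > 0" using w by (simp add: \<epsilon>_def P_def)
  obtain \<sigma> :: "'a \<Rightarrow> 'a" where \<sigma>: "\<And>a. \<sigma> a \<noteq> a"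
    using fixed_point_free_map_exists[OF card] by blast
  show ?thesis
  proof (rule delta_open_sets_differ[OF nu(1) \<open>\<epsilon> > 0\<close>])
    fix e :: real assume "e > 0"
    obtain n :: nat where n: "1 / (e * \<epsilon>\<^sup>2) < real n" using reals_Archimedean2 by blast
    moreover have "0 < 1 / (e * \<epsilon>\<^sup>2)" using \<open>e > 0\<close> \<open>\<epsilon> > 0\<close> by simp
    ultimately have "n > 0" by (metis less_trans of_nat_0_less_iff)
    have small: "1 / (real n * \<epsilon>\<^sup>2) < e"
      using n \<open>n > 0\<close> \<open>e > 0\<close> \<open>\<epsilon> > 0\<close> by (simp add: field_simps)
    define G where "G = deviation_set w P n \<epsilon>"
    have c: "flip_ca \<sigma> G \<in> CA"
      unfolding G_def by (rule flip_ca_CA[of "int ` {..<n * length w}"]) (simp_all add: deviation_set_local)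
    have "delta M id (flip_ca \<sigma> G) = measure M G" "delta \<nu> id (flip_ca \<sigma> G) = measure \<nu> G"
      by (simp_all add: delta_def flip_ca_disagreement[OF \<sigma>])
    moreover have "measure M G \<le> 1 / (real n * \<epsilon>\<^sup>2)"
      unfolding G_def P_def using B \<open>n > 0\<close> \<open>\<epsilon> > 0\<close> by (rule bernoulli_deviation_set_small)
    moreover have "2 * \<epsilon> \<le> \<epsilon> + measure \<nu> G"
      using stationary_deviation_set_large[OF nu bernoulli_cyl_prob_bounds[OF B] \<open>n > 0\<close>, of \<epsilon> w]
        \<open>\<epsilon> > 0\<close> by (simp add: G_def \<epsilon>_def P_def)
    ultimately show "\<exists>c\<in>CA. delta M id c < e \<and> \<epsilon> \<le> delta \<nu> id c"
      using c small by (intro bexI[of _ "flip_ca \<sigma> G"]) auto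
  qed
qed

theorem corollary5p4:
  assumes "CARD('a::finite) \<ge> 2"
  shows "(\<forall>(p::'a \<Rightarrow> real) q M N. bernoulli_measure p M \<and> bernoulli_measure q N \<and> M \<noteq> N
            \<longrightarrow> delta_open_sets M \<noteq> delta_open_sets N)
       \<and> (\<forall>(p::'a \<Rightarrow> real) M \<nu>. bernoulli_measure p M \<and> borel_prob \<nu> \<and> shift_invariant \<nu> \<and> \<nu> \<noteq> M
            \<longrightarrow> delta_open_sets \<nu> \<noteq> delta_open_sets M)"
proof (intro conjI allI impI)
  fix p q :: "'a \<Rightarrow> real" and M N
  assume "bernoulli_measure p M \<and> bernoulli_measure q N \<and> M \<noteq> N"
  then show "delta_open_sets M \<noteq> delta_open_sets N"
    using delta_topology_separates_from_bernoulli[OF assms, of p M N]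
    by (metis bernoulli_measure_borel_prob bernoulli_measure_cyl_stationary)
next
  fix p :: "'a \<Rightarrow> real" and M \<nu>
  assume "bernoulli_measure p M \<and> borel_prob \<nu> \<and> shift_invariant \<nu> \<and> \<nu> \<noteq> M"
  then show "delta_open_sets \<nu> \<noteq> delta_open_sets M"
    using delta_topology_separates_from_bernoulli[OF assms, of p M \<nu>] shift_invariant_cyl_stationary
    by metis
qed

end
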